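(* Let $N\ge 2$, $x_0<x_1<\dots<x_N$, $I=[x_0,x_N]$, $I_i=[x_{i-1},x_i)$ for $i<N$, $I_N=[x_{N-1},x_N]$. For $i=1,\dots,N$ let $L_i(x)=a_ix+b_i$ with $a_i=\frac{x_i-x_{i-1}}{x_N-x_0}$, $b_i=\frac{x_Nx_{i-1}-x_0x_i}{x_N-x_0}$, let $\alpha_i\in(-1,1)$, and let $q_i:I\to\mathbb{R}$ be Lipschitz continuous. Let $f$ be the unique bounded function on $I$ with $f(x)=\alpha_if(L_i^{-1}(x))+q_i(L_i^{-1}(x))$ for $x\in I_i$, $i=1,\dots,N$. Then the set of points of discontinuity of $f$ has Lebesgue measure zero; in particular $f$ is Riemann integrable on $I$. *)

theory Defs
  imports "HOL-Analysis.Analysis"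
begin

definition riemann_integrable_on :: "(real \<Rightarrow> real) \<Rightarrow> real \<Rightarrow> real \<Rightarrow> bool" where
  "riemann_integrable_on f a b \<longleftrightarrow>
     (\<exists>J. \<forall>e>0. \<exists>d>0. \<forall>D. D tagged_division_of {a..b} \<and> (\<forall>(t,K)\<in>D. diameter K < d) \<longrightarrow>
        \<bar>(\<Sum>(t,K)\<in>D. Henstock_Kurzweil_Integration.content K * f t) - J\<bar> < e)"

end

theory Submission
  imports Defs
begin

text \<open>Write \<open>\<Phi>\<^sub>i\<close> for the inverse of \<open>L\<^sub>i\<close>. On the open piece \<open>(x (i - 1), x i)\<close> the
  function \<open>f\<close> equals \<open>\<alpha>\<^sub>i (f \<circ> \<Phi>\<^sub>i) + q\<^sub>i \<circ> \<Phi>\<^sub>i\<close>. So if, off finitely many cut points, \<open>f\<close>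
  oscillates by at most \<open>\<epsilon>\<close> at some scale, then off the partition points and the \<open>L\<^sub>i\<close>-images
  of the cut points it oscillates by at most \<open>\<kappa>\<epsilon> + \<eta>\<close> at a smaller scale, where
  \<open>\<kappa> = max |\<alpha>\<^sub>i| < 1\<close> and \<open>\<eta> > 0\<close> is arbitrary (the Lipschitz terms). Starting from
  \<open>2 sup |f|\<close> and iterating, \<open>f\<close> oscillates arbitrarily little off finitely many points.
  Such a function has only countably many discontinuities, and its Riemann sums converge:
  the cells meeting a cut point have total length \<open>O(\<delta>)\<close>.\<close>

text \<open>Holding for every \<open>e > 0\<close> on a compact interval, this characterises the regulated
  functions (those with one-sided limits everywhere).\<close>

definition piecewise_oscillation_le :: "(real \<Rightarrow> real) \<Rightarrow> real set \<Rightarrow> real \<Rightarrow> bool" where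
  "piecewise_oscillation_le g S e \<longleftrightarrow>
     (\<exists>F \<delta>. finite F \<and> \<delta> > 0 \<and> (\<forall>s\<in>S. \<forall>t\<in>S. \<bar>s - t\<bar> < \<delta> \<longrightarrow>
        F \<inter> {min s t..max s t} = {} \<longrightarrow> \<bar>g s - g t\<bar> \<le> e))"

lemma piecewise_oscillation_leI:
  assumes "finite F" "\<delta> > 0"
    and "\<And>s t. s \<in> S \<Longrightarrow> t \<in> S \<Longrightarrow> \<bar>s - t\<bar> < \<delta> \<Longrightarrow> F \<inter> {min s t..max s t} = {} \<Longrightarrow>
           \<bar>g s - g t\<bar> \<le> e"
  shows "piecewise_oscillation_le g S e"
  using assms unfolding piecewise_oscillation_le_def by blast

lemma piecewise_oscillation_leE:
  assumes "piecewise_oscillation_le g S e"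
  obtains F \<delta> where "finite F" "\<delta> > 0"
    "\<And>s t. s \<in> S \<Longrightarrow> t \<in> S \<Longrightarrow> \<bar>s - t\<bar> < \<delta> \<Longrightarrow> F \<inter> {min s t..max s t} = {} \<Longrightarrow>
       \<bar>g s - g t\<bar> \<le> e"
  using assms unfolding piecewise_oscillation_le_def by blast

lemma piecewise_oscillation_le_mono:
  assumes "piecewise_oscillation_le g S e" "e \<le> e'"
  shows "piecewise_oscillation_le g S e'"
  using assms unfolding piecewise_oscillation_le_def by (meson order_trans)

lemma piecewise_oscillation_le_cong:
  assumes "piecewise_oscillation_le g S e" "\<And>s. s \<in> S \<Longrightarrow> g s = h s"
  shows "piecewise_oscillation_le h S e"
  using assms unfolding piecewise_oscillation_le_def by metis

lemma piecewise_oscillation_le_bounded: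
  assumes "\<And>s. s \<in> S \<Longrightarrow> \<bar>g s\<bar> \<le> M"
  shows "piecewise_oscillation_le g S (2 * M)"
proof (rule piecewise_oscillation_leI[of "{}" 1])
  fix s t assume "s \<in> S" "t \<in> S"
  then show "\<bar>g s - g t\<bar> \<le> 2 * M"
    using assms[of s] assms[of t] by linarith
qed simp_all

lemma piecewise_oscillation_le_add:
  assumes "piecewise_oscillation_le g S e" "piecewise_oscillation_le h S e'"
  shows "piecewise_oscillation_le (\<lambda>s. g s + h s) S (e + e')"
proof -
  obtain F \<delta> where F: "finite F" "\<delta> > 0" and g: "\<And>s t. s \<in> S \<Longrightarrow> t \<in> S \<Longrightarrow> \<bar>s - t\<bar> < \<delta> \<Longrightarrow>
      F \<inter> {min s t..max s t} = {} \<Longrightarrow> \<bar>g s - g t\<bar> \<le> e"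
    using piecewise_oscillation_leE[OF assms(1)] by blast
  obtain F' \<delta>' where F': "finite F'" "\<delta>' > 0" and h: "\<And>s t. s \<in> S \<Longrightarrow> t \<in> S \<Longrightarrow> \<bar>s - t\<bar> < \<delta>' \<Longrightarrow>
      F' \<inter> {min s t..max s t} = {} \<Longrightarrow> \<bar>h s - h t\<bar> \<le> e'"
    using piecewise_oscillation_leE[OF assms(2)] by blast
  show ?thesis
  proof (rule piecewise_oscillation_leI[of "F \<union> F'" "min \<delta> \<delta>'"])
    fix s t assume "s \<in> S" "t \<in> S" "\<bar>s - t\<bar> < min \<delta> \<delta>'"
      and "(F \<union> F') \<inter> {min s t..max s t} = {}"
    then have "\<bar>g s - g t\<bar> \<le> e" "\<bar>h s - h t\<bar> \<le> e'"
      by (auto intro!: g h)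
    then show "\<bar>g s + h s - (g t + h t)\<bar> \<le> e + e'"
      by linarith
  qed (use F F' in auto)
qed

lemma piecewise_oscillation_le_cmult:
  assumes "piecewise_oscillation_le g S e"
  shows "piecewise_oscillation_le (\<lambda>s. c * g s) S (\<bar>c\<bar> * e)"
  using assms unfolding piecewise_oscillation_le_def
  by (metis abs_ge_zero abs_mult mult_left_mono right_diff_distrib)

lemma piecewise_oscillation_le_lipschitz:
  assumes "L-lipschitz_on S g" "\<eta> > 0"
  shows "piecewise_oscillation_le g S \<eta>"
proof (rule piecewise_oscillation_leI[of "{}" "\<eta> / (L + 1)"])
  have L: "0 \<le> L" using assms(1) by (rule lipschitz_on_nonneg)
  then show "\<eta> / (L + 1) > 0" using assms(2) by simp
  fix s t assume "s \<in> S" "t \<in> S" "\<bar>s - t\<bar> < \<eta> / (L + 1)"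
  then have "\<bar>g s - g t\<bar> \<le> L * \<bar>s - t\<bar>" "\<bar>s - t\<bar> * (L + 1) < \<eta>"
    using lipschitz_onD[OF assms(1)] L by (auto simp: dist_real_def pos_less_divide_eq)
  moreover have "L * \<bar>s - t\<bar> \<le> \<bar>s - t\<bar> * (L + 1)"
    by (simp add: algebra_simps)
  ultimately show "\<bar>g s - g t\<bar> \<le> \<eta>"
    by linarith
qed simp

lemma piecewise_oscillation_le_compose_affine:
  assumes "piecewise_oscillation_le g S e" "c > 0" "\<And>y. y \<in> T \<Longrightarrow> c * y + d \<in> S"
  shows "piecewise_oscillation_le (\<lambda>y. g (c * y + d)) T e"
proof -
  obtain F \<delta> where F: "finite F" "\<delta> > 0" and g: "\<And>s t. s \<in> S \<Longrightarrow> t \<in> S \<Longrightarrow> \<bar>s - t\<bar> < \<delta> \<Longrightarrow>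
      F \<inter> {min s t..max s t} = {} \<Longrightarrow> \<bar>g s - g t\<bar> \<le> e"
    using piecewise_oscillation_leE[OF assms(1)] by blast
  show ?thesis
  proof (rule piecewise_oscillation_leI[of "(\<lambda>p. (p - d) / c) ` F" "\<delta> / c"])
    fix s t assume st: "s \<in> T" "t \<in> T" "\<bar>s - t\<bar> < \<delta> / c"
      and avoid: "(\<lambda>p. (p - d) / c) ` F \<inter> {min s t..max s t} = {}"
    have "F \<inter> {min (c * s + d) (c * t + d)..max (c * s + d) (c * t + d)} = {}"
    proof (intro equals0I)
      fix p assume p: "p \<in> F \<inter> {min (c * s + d) (c * t + d)..max (c * s + d) (c * t + d)}"
      then have "(p - d) / c \<in> {min s t..max s t}"
        using \<open>c > 0\<close> by (auto simp: min_def max_def field_simps split: if_splits)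
      then show False using avoid p by blast
    qed
    moreover have "\<bar>(c * s + d) - (c * t + d)\<bar> < \<delta>"
      using st(3) \<open>c > 0\<close> by (simp add: abs_mult pos_less_divide_eq mult.commute flip: right_diff_distrib)
    ultimately show "\<bar>g (c * s + d) - g (c * t + d)\<bar> \<le> e"
      using g assms(3) st by blast
  qed (use F \<open>c > 0\<close> in auto)
qed

lemma partition_less:
  fixes x :: "nat \<Rightarrow> real"
  assumes "\<And>i. i < N \<Longrightarrow> x i < x (Suc i)" "i < j" "j \<le> N"
  shows "x i < x j"
  using assms(2,3)
proof (induction j)
  case (Suc j)
  then show ?case
    using assms(1)[of j] by (cases "i = j") auto
qed simp

lemma open_piece_of_partition:
  fixes x :: "nat \<Rightarrow> real"
  assumes "s \<in> {x 0..x N}" "s \<notin> x ` {..N}"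
  obtains i where "1 \<le> i" "i \<le> N" "s \<in> {x (i - 1)<..<x i}"
proof -
  define i where "i = (LEAST j. s < x j)"
  have "s < x N" using assms by force
  then have "s < x i" "i \<le> N"
    unfolding i_def by (auto intro: LeastI Least_le)
  moreover have "i \<noteq> 0"
    using \<open>s < x i\<close> assms by (auto simp: i_def)
  moreover have "x (i - 1) < s"
  proof -
    have "\<not> s < x (i - 1)"
      using \<open>i \<noteq> 0\<close> unfolding i_def by (metis diff_less not_less_Least zero_less_one neq0_conv)
    moreover have "x (i - 1) \<noteq> s"
      using assms(2) \<open>i \<le> N\<close> by force
    ultimately show ?thesis by simp
  qed
  ultimately show thesis
    using that[of i] by (auto simp: Suc_le_eq)
qed

lemma piecewise_oscillation_le_glue:
  fixes x :: "nat \<Rightarrow> real"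
  assumes "\<And>i. 1 \<le> i \<Longrightarrow> i \<le> N \<Longrightarrow> piecewise_oscillation_le g {x (i - 1)<..<x i} e"
  shows "piecewise_oscillation_le g {x 0..x N} e"
proof -
  obtain F \<delta> where F: "\<And>i. 1 \<le> i \<Longrightarrow> i \<le> N \<Longrightarrow> finite (F i) \<and> \<delta> i > 0"
    and g: "\<And>i s t. 1 \<le> i \<Longrightarrow> i \<le> N \<Longrightarrow> s \<in> {x (i - 1)<..<x i} \<Longrightarrow> t \<in> {x (i - 1)<..<x i} \<Longrightarrow>
      \<bar>s - t\<bar> < \<delta> i \<Longrightarrow> F i \<inter> {min s t..max s t} = {} \<Longrightarrow> \<bar>g s - g t\<bar> \<le> e"
    using assms unfolding piecewise_oscillation_le_def by metis
  show ?thesis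
  proof (rule piecewise_oscillation_leI[of "x ` {..N} \<union> (\<Union>i\<in>{1..N}. F i)" "Min (insert 1 (\<delta> ` {1..N}))"])
    fix s t assume st: "s \<in> {x 0..x N}" "t \<in> {x 0..x N}" "\<bar>s - t\<bar> < Min (insert 1 (\<delta> ` {1..N}))"
      and avoid: "(x ` {..N} \<union> (\<Union>i\<in>{1..N}. F i)) \<inter> {min s t..max s t} = {}"
    then obtain i where i: "1 \<le> i" "i \<le> N" "s \<in> {x (i - 1)<..<x i}"
      using open_piece_of_partition[of s x N] by force
    have "x (i - 1) \<in> x ` {..N}" "x i \<in> x ` {..N}"
      using i by auto
    then have "x (i - 1) \<notin> {min s t..max s t}" "x i \<notin> {min s t..max s t}"
      using avoid by blast+
    then have "t \<in> {x (i - 1)<..<x i}"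
      using i by (auto simp: min_def max_def split: if_splits)
    moreover have "\<bar>s - t\<bar> < \<delta> i"
      using st(3) i F by simp
    moreover have "F i \<subseteq> (\<Union>i\<in>{1..N}. F i)"
      using i by auto
    then have "F i \<inter> {min s t..max s t} = {}"
      using avoid by blast
    ultimately show "\<bar>g s - g t\<bar> \<le> e"
      using g i by blast
  qed (use F in auto)
qed

lemma piecewise_oscillation_le_self_affine_step:
  fixes x A B \<alpha> :: "nat \<Rightarrow> real" and q :: "nat \<Rightarrow> real \<Rightarrow> real"
  assumes A: "\<And>i. 1 \<le> i \<Longrightarrow> i \<le> N \<Longrightarrow> A i > 0"
    and ends: "\<And>i. 1 \<le> i \<Longrightarrow> i \<le> N \<Longrightarrow> A i * x 0 + B i = x (i - 1) \<and> A i * x N + B i = x i"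
    and alpha: "\<And>i. 1 \<le> i \<Longrightarrow> i \<le> N \<Longrightarrow> \<bar>\<alpha> i\<bar> \<le> \<kappa>"
    and lip: "\<And>i. 1 \<le> i \<Longrightarrow> i \<le> N \<Longrightarrow> L-lipschitz_on {x 0..x N} (q i)"
    and fe: "\<And>i y. 1 \<le> i \<Longrightarrow> i \<le> N \<Longrightarrow> y \<in> {x (i - 1)<..<x i} \<Longrightarrow>
               f y = \<alpha> i * f ((y - B i) / A i) + q i ((y - B i) / A i)"
    and osc: "piecewise_oscillation_le f {x 0..x N} \<epsilon>" and "\<epsilon> \<ge> 0" "\<eta> > 0"
  shows "piecewise_oscillation_le f {x 0..x N} (\<kappa> * \<epsilon> + \<eta>)"
proof (rule piecewise_oscillation_le_glue)
  fix i assume i: "1 \<le> i" "i \<le> N"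
  define c d where "c = 1 / A i" and "d = - B i / A i"
  have c: "c > 0" using A[OF i] by (simp add: c_def)
  have inv: "(y - B i) / A i = c * y + d" for y
    using A[OF i] by (simp add: c_def d_def field_simps)
  have maps: "c * y + d \<in> {x 0..x N}" if "y \<in> {x (i - 1)<..<x i}" for y
    using that ends[OF i] A[OF i] unfolding inv[symmetric]
    by (auto simp: pos_le_divide_eq pos_divide_le_eq mult.commute)
  have "piecewise_oscillation_le (\<lambda>y. \<alpha> i * f (c * y + d) + q i (c * y + d)) {x (i - 1)<..<x i}
          (\<bar>\<alpha> i\<bar> * \<epsilon> + \<eta>)"
    using piecewise_oscillation_le_compose_affine[OF osc c maps]
      piecewise_oscillation_le_compose_affine[OF piecewise_oscillation_le_lipschitz[OF lip[OF i] \<open>\<eta> > 0\<close>] c maps]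
    by (intro piecewise_oscillation_le_add piecewise_oscillation_le_cmult)
  then have "piecewise_oscillation_le f {x (i - 1)<..<x i} (\<bar>\<alpha> i\<bar> * \<epsilon> + \<eta>)"
    by (rule piecewise_oscillation_le_cong) (use fe[OF i] in \<open>simp add: inv\<close>)
  then show "piecewise_oscillation_le f {x (i - 1)<..<x i} (\<kappa> * \<epsilon> + \<eta>)"
    by (rule piecewise_oscillation_le_mono) (use alpha[OF i] \<open>\<epsilon> \<ge> 0\<close> in \<open>simp_all add: mult_right_mono\<close>)
qed

lemma piecewise_oscillation_le_iterate:
  assumes "piecewise_oscillation_le g S e\<^sub>0" "e\<^sub>0 > 0" "0 < \<mu>" "\<mu> < 1"
    and step: "\<And>e. e > 0 \<Longrightarrow> piecewise_oscillation_le g S e \<Longrightarrow> piecewise_oscillation_le g S (\<mu> * e)"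
    and "e > 0"
  shows "piecewise_oscillation_le g S e"
proof -
  have "piecewise_oscillation_le g S (\<mu> ^ n * e\<^sub>0)" for n
    by (induction n) (use assms in \<open>auto simp: mult.assoc\<close>)
  moreover obtain n where "\<mu> ^ n < e / e\<^sub>0"
    using real_arch_pow_inv[of "e / e\<^sub>0" \<mu>] assms by auto
  then have "\<mu> ^ n * e\<^sub>0 \<le> e"
    using assms(2) by (simp add: pos_less_divide_eq)
  ultimately show ?thesis
    by (rule piecewise_oscillation_le_mono)
qed

lemma piecewise_oscillation_le_self_affine:
  fixes x A B \<alpha> :: "nat \<Rightarrow> real" and q :: "nat \<Rightarrow> real \<Rightarrow> real"
  assumes A: "\<And>i. 1 \<le> i \<Longrightarrow> i \<le> N \<Longrightarrow> A i > 0"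
    and ends: "\<And>i. 1 \<le> i \<Longrightarrow> i \<le> N \<Longrightarrow> A i * x 0 + B i = x (i - 1) \<and> A i * x N + B i = x i"
    and alpha: "\<And>i. 1 \<le> i \<Longrightarrow> i \<le> N \<Longrightarrow> \<bar>\<alpha> i\<bar> < 1"
    and lip: "\<And>i. 1 \<le> i \<Longrightarrow> i \<le> N \<Longrightarrow> \<exists>C. C-lipschitz_on {x 0..x N} (q i)"
    and bdd: "bounded (f ` {x 0..x N})"
    and fe: "\<And>i y. 1 \<le> i \<Longrightarrow> i \<le> N \<Longrightarrow> y \<in> {x (i - 1)<..<x i} \<Longrightarrow>
               f y = \<alpha> i * f ((y - B i) / A i) + q i ((y - B i) / A i)"
    and "e > 0"
  shows "piecewise_oscillation_le f {x 0..x N} e"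
proof -
  obtain M where M: "M > 0" "\<And>y. y \<in> {x 0..x N} \<Longrightarrow> \<bar>f y\<bar> \<le> M"
    using bdd unfolding bounded_pos by auto
  define \<kappa> where "\<kappa> = Max (insert 0 ((\<lambda>i. \<bar>\<alpha> i\<bar>) ` {1..N}))"
  have \<kappa>: "0 \<le> \<kappa>" "\<kappa> < 1" "\<And>i. 1 \<le> i \<Longrightarrow> i \<le> N \<Longrightarrow> \<bar>\<alpha> i\<bar> \<le> \<kappa>"
    using alpha unfolding \<kappa>_def by (auto intro!: Max_ge simp del: Max_insert)
  obtain C where C: "\<And>i. 1 \<le> i \<Longrightarrow> i \<le> N \<Longrightarrow> (C i)-lipschitz_on {x 0..x N} (q i)"
    using lip by metis
  have L: "(Max (C ` {1..N}))-lipschitz_on {x 0..x N} (q i)" if "1 \<le> i" "i \<le> N" for i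
    by (rule lipschitz_on_le[OF C[OF that]]) (use that in auto)
  show ?thesis
  proof (rule piecewise_oscillation_le_iterate[where \<mu> = "(1 + \<kappa>) / 2"])
    show "piecewise_oscillation_le f {x 0..x N} (2 * M)"
      using M(2) by (rule piecewise_oscillation_le_bounded)
    fix \<epsilon> :: real assume "\<epsilon> > 0" "piecewise_oscillation_le f {x 0..x N} \<epsilon>"
    then have "piecewise_oscillation_le f {x 0..x N} (\<kappa> * \<epsilon> + (1 - \<kappa>) / 2 * \<epsilon>)"
      using \<kappa> by (intro piecewise_oscillation_le_self_affine_step[OF A ends \<kappa>(3) L fe]) auto
    then show "piecewise_oscillation_le f {x 0..x N} ((1 + \<kappa>) / 2 * \<epsilon>)"
      by (simp add: field_simps)
  qed (use \<kappa> M \<open>e > 0\<close> in auto)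
qed

lemma piecewise_oscillation_le_near_point:
  assumes "piecewise_oscillation_le g S e"
  shows "\<exists>F. finite F \<and> (\<forall>y\<in>S - F. \<exists>d>0. \<forall>s\<in>S. \<bar>s - y\<bar> < d \<longrightarrow> \<bar>g s - g y\<bar> \<le> e)"
proof -
  obtain F \<delta> where F: "finite F" "\<delta> > 0" and g: "\<And>s t. s \<in> S \<Longrightarrow> t \<in> S \<Longrightarrow> \<bar>s - t\<bar> < \<delta> \<Longrightarrow>
      F \<inter> {min s t..max s t} = {} \<Longrightarrow> \<bar>g s - g t\<bar> \<le> e"
    using piecewise_oscillation_leE[OF assms] by blast
  have "\<exists>d>0. \<forall>s\<in>S. \<bar>s - y\<bar> < d \<longrightarrow> \<bar>g s - g y\<bar> \<le> e" if y: "y \<in> S - F" for y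
  proof -
    obtain r where r: "r > 0" "\<And>p. p \<in> F \<Longrightarrow> p \<noteq> y \<Longrightarrow> r \<le> dist y p"
      using finite_set_avoid[OF F(1)] by metis
    have "\<bar>g s - g y\<bar> \<le> e" if "s \<in> S" "\<bar>s - y\<bar> < min r \<delta>" for s
    proof (rule g)
      show "F \<inter> {min s y..max s y} = {}"
        using r y that by (force simp: dist_real_def)
    qed (use y that in auto)
    then show ?thesis
      using r F(2) by (intro exI[of _ "min r \<delta>"]) auto
  qed
  then show ?thesis
    using F(1) by blast
qed

lemma countable_discontinuities_if_piecewise_oscillation:
  assumes "\<And>e. e > 0 \<Longrightarrow> piecewise_oscillation_le g S e"
  shows "countable {y \<in> S. \<not> continuous (at y within S) g}"
proof -
  have "\<exists>F. finite F \<and> (\<forall>y\<in>S - F. \<exists>d>0. \<forall>s\<in>S. \<bar>s - y\<bar> < d \<longrightarrow> \<bar>g s - g y\<bar> \<le> 1 / Suc n)" for n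
    by (rule piecewise_oscillation_le_near_point) (simp add: assms)
  then obtain F where F: "\<And>n. finite (F n)"
    and near: "\<And>n y. y \<in> S - F n \<Longrightarrow> \<exists>d>0. \<forall>s\<in>S. \<bar>s - y\<bar> < d \<longrightarrow> \<bar>g s - g y\<bar> \<le> 1 / Suc n"
    by metis
  have "continuous (at y within S) g" if y: "y \<in> S" "y \<notin> (\<Union>n. F n)" for y
    unfolding continuous_within_eps_delta
  proof (intro allI impI)
    fix e :: real assume "e > 0"
    then obtain n where n: "1 / Suc n < e"
      by (metis nat_approx_posE of_nat_Suc)
    obtain d where "d > 0" "\<And>s. s \<in> S \<Longrightarrow> \<bar>s - y\<bar> < d \<Longrightarrow> \<bar>g s - g y\<bar> \<le> 1 / Suc n"
      using near[of y n] y by blast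
    then show "\<exists>d>0. \<forall>s\<in>S. dist s y < d \<longrightarrow> dist (g s) (g y) < e"
      using n by (force simp: dist_real_def)
  qed
  then have "{y \<in> S. \<not> continuous (at y within S) g} \<subseteq> (\<Union>n. F n)"
    by blast
  then show ?thesis
    using F by (meson countable_UN countable_finite countable_subset UNIV_I countableI_type)
qed

lemma integrable_on_if_null_discontinuities:
  fixes g :: "'a::euclidean_space \<Rightarrow> real"
  assumes bound: "\<And>y. y \<in> cbox a b \<Longrightarrow> \<bar>g y\<bar> \<le> M"
    and null: "{y \<in> cbox a b. \<not> continuous (at y within cbox a b) g} \<in> null_sets lebesgue"
  shows "g integrable_on cbox a b"
proof -
  define D where "D = {y \<in> cbox a b. \<not> continuous (at y within cbox a b) g}"
  have "continuous_on (cbox a b - D) g"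
    unfolding continuous_on_eq_continuous_within D_def
    by (blast intro: continuous_within_subset)
  moreover have "cbox a b - D \<in> sets lebesgue"
    using null by (auto simp: D_def intro: null_sets.Diff)
  ultimately have "g \<in> borel_measurable (lebesgue_on (cbox a b - D))"
    by (rule continuous_imp_measurable_on_sets_lebesgue)
  moreover have "D \<in> null_sets (lebesgue_on (cbox a b))"
    using null by (auto simp: D_def null_sets_restrict_space)
  ultimately have "g \<in> borel_measurable (lebesgue_on (cbox a b))"
    by (simp add: borel_measurable_diff_null)
  then show ?thesis
    by (rule measurable_bounded_by_integrable_imp_integrable[where g = "\<lambda>_. M"]) (auto simp: bound)
qed

hide_const (open) Polynomial.content

lemma riemann_integrable_on_if_oscillation_dominated:
  fixes g :: "real \<Rightarrow> real"
  assumes g: "g integrable_on {a..b}"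
    and dom: "\<And>e. e > 0 \<Longrightarrow> \<exists>\<delta>>0. \<exists>h. h integrable_on {a..b} \<and> integral {a..b} h < e \<and>
                 (\<forall>s\<in>{a..b}. \<forall>t\<in>{a..b}. \<bar>s - t\<bar> < \<delta> \<longrightarrow> \<bar>g t - g s\<bar> \<le> h s)"
  shows "riemann_integrable_on g a b"
  unfolding riemann_integrable_on_def
proof (rule exI[of _ "integral {a..b} g"], intro allI impI)
  fix e :: real assume "e > 0"
  then obtain \<delta> h where \<delta>: "\<delta> > 0" and h: "h integrable_on {a..b}" "integral {a..b} h < e"
    and osc: "\<And>s t. s \<in> {a..b} \<Longrightarrow> t \<in> {a..b} \<Longrightarrow> \<bar>s - t\<bar> < \<delta> \<Longrightarrow> \<bar>g t - g s\<bar> \<le> h s"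
    using dom by meson
  show "\<exists>d>0. \<forall>D. D tagged_division_of {a..b} \<and> (\<forall>(t, K)\<in>D. diameter K < d) \<longrightarrow>
          \<bar>(\<Sum>(t, K)\<in>D. content K * g t) - integral {a..b} g\<bar> < e"
  proof (intro exI[of _ \<delta>] conjI allI impI \<delta>)
    fix D assume D: "D tagged_division_of {a..b} \<and> (\<forall>(t, K)\<in>D. diameter K < \<delta>)"
    then have div: "D tagged_division_of cbox a b"
      by simp
    have cell: "\<bar>content K * g t - integral K g\<bar> \<le> integral K h" if tK: "(t, K) \<in> D" for t K
    proof -
      obtain u v where K: "K = {u..v}"
        using tagged_division_ofD(4)[OF div tK] by auto
      have t: "t \<in> K" and Kab: "K \<subseteq> {a..b}"
        using tagged_division_ofD(2,3)[OF div tK] by auto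
      have gK: "g integrable_on K" and hK: "h integrable_on K"
        using integrable_subinterval_real g h(1) Kab unfolding K by blast+
      have "content K * g t - integral K g = integral K (\<lambda>s. g t - g s)"
        using gK unfolding K by (simp add: integral_diff integrable_const_ivl)
      also have "\<bar>\<dots>\<bar> \<le> integral K h"
      proof (rule integral_norm_bound_integral[of "\<lambda>s. g t - g s" K h, OF _ hK, unfolded real_norm_def])
        show "(\<lambda>s. g t - g s) integrable_on K"
          using gK unfolding K by (intro integrable_diff integrable_const_ivl)
        fix s assume "s \<in> K"
        moreover have "diameter K < \<delta>"
          using D tK by auto
        ultimately have "\<bar>s - t\<bar> < \<delta>"
          using diameter_bounded_bound[of K s t] t unfolding K by (simp add: dist_real_def)
        then show "\<bar>g t - g s\<bar> \<le> h s"
          using osc \<open>s \<in> K\<close> t Kab by blast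
      qed
      finally show ?thesis .
    qed
    have "\<bar>(\<Sum>(t, K)\<in>D. content K * g t) - integral {a..b} g\<bar>
        = \<bar>\<Sum>(t, K)\<in>D. content K * g t - integral K g\<bar>"
      using integral_combine_tagged_division_topdown[OF g[unfolded box_real(2)[symmetric]] div]
      by (simp add: sum_subtractf split_def)
    also have "\<dots> \<le> (\<Sum>(t, K)\<in>D. integral K h)"
      using cell by (intro order_trans[OF sum_abs] sum_mono) auto
    also have "\<dots> = integral {a..b} h"
      using integral_combine_tagged_division_topdown[OF h(1)[unfolded box_real(2)[symmetric]] div]
      by (simp add: split_def)
    finally show "\<bar>(\<Sum>(t, K)\<in>D. content K * g t) - integral {a..b} g\<bar> < e"
      using h(2) by linarith
  qed
qed

lemma integral_indicator_interval_le:
  fixes a b c d :: real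
  assumes "c \<le> d"
  shows "(indicator {c..d} :: real \<Rightarrow> real) integrable_on {a..b}"
    and "integral {a..b} (indicator {c..d}) \<le> d - c"
proof -
  have eq: "indicator {c..d} = (\<lambda>s. if s \<in> {c..d} then 1 else 0 :: real)"
    by (auto simp: indicator_def)
  show "(indicator {c..d} :: real \<Rightarrow> real) integrable_on {a..b}"
    unfolding eq integrable_restrict_Int Int_atLeastAtMost by (rule integrable_const_ivl)
  show "integral {a..b} (indicator {c..d}) \<le> d - c"
    unfolding eq integral_restrict_Int Int_atLeastAtMost using assms by (simp add: content_real min_def max_def)
qed

lemma piecewise_oscillation_le_dominated:
  fixes g :: "real \<Rightarrow> real"
  assumes bound: "\<And>s. s \<in> {a..b} \<Longrightarrow> \<bar>g s\<bar> \<le> M"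
    and osc: "piecewise_oscillation_le g {a..b} \<epsilon>" and "\<epsilon> \<ge> 0" "\<rho> > 0"
  shows "\<exists>\<delta>>0. \<exists>h. h integrable_on {a..b} \<and> integral {a..b} h \<le> \<epsilon> * content {a..b} + \<rho> \<and>
           (\<forall>s\<in>{a..b}. \<forall>t\<in>{a..b}. \<bar>s - t\<bar> < \<delta> \<longrightarrow> \<bar>g t - g s\<bar> \<le> h s)"
proof -
  obtain F \<delta>\<^sub>0 where F: "finite F" "\<delta>\<^sub>0 > 0" and g: "\<And>s t. s \<in> {a..b} \<Longrightarrow> t \<in> {a..b} \<Longrightarrow>
      \<bar>s - t\<bar> < \<delta>\<^sub>0 \<Longrightarrow> F \<inter> {min s t..max s t} = {} \<Longrightarrow> \<bar>g s - g t\<bar> \<le> \<epsilon>"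
    using piecewise_oscillation_leE[OF osc] by blast
  define \<delta> where "\<delta> = min \<delta>\<^sub>0 (\<rho> / (4 * (\<bar>M\<bar> + 1) * (card F + 1)))"
  have \<delta>: "\<delta> > 0" "4 * \<bar>M\<bar> * card F * \<delta> \<le> \<rho>"
  proof -
    show "\<delta> > 0"
      using F(2) \<open>\<rho> > 0\<close> by (simp add: \<delta>_def)
    have "4 * \<bar>M\<bar> * card F \<le> 4 * (\<bar>M\<bar> + 1) * (card F + 1)"
      by (intro mult_mono) auto
    then have "4 * \<bar>M\<bar> * card F * \<delta> \<le> 4 * (\<bar>M\<bar> + 1) * (card F + 1) * \<delta>"
      using \<open>\<delta> > 0\<close> by (intro mult_right_mono) auto
    also have "\<dots> \<le> \<rho>"
    proof -
      have "0 < 4 * (\<bar>M\<bar> + 1) * (card F + 1)"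
        by (simp add: add_pos_nonneg)
      moreover have "\<delta> \<le> \<rho> / (4 * (\<bar>M\<bar> + 1) * (card F + 1))"
        by (simp add: \<delta>_def)
      ultimately show ?thesis
        by (simp add: pos_le_divide_eq mult.commute)
    qed
    finally show "4 * \<bar>M\<bar> * card F * \<delta> \<le> \<rho>" .
  qed
  have bump: "p - \<delta> \<le> p + \<delta>" for p
    using \<delta>(1) by simp
  define h where "h s = \<epsilon> + 2 * \<bar>M\<bar> * (\<Sum>p\<in>F. indicator {p - \<delta>..p + \<delta>} s)" for s :: real
  have sum_int: "(\<lambda>s. \<Sum>p\<in>F. indicator {p - \<delta>..p + \<delta>} s :: real) integrable_on {a..b}"
    using F(1) integral_indicator_interval_le(1)[OF bump] by (rule integrable_sum)
  then have "h integrable_on {a..b}"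
    unfolding h_def
    by (intro integrable_add integrable_const_ivl) (use integrable_on_cmult_left[OF sum_int] in simp)
  moreover have "integral {a..b} h \<le> \<epsilon> * content {a..b} + \<rho>"
  proof -
    have "integral {a..b} h = integral {a..b} (\<lambda>_. \<epsilon>) + integral {a..b} (\<lambda>s. 2 * \<bar>M\<bar> * (\<Sum>p\<in>F. indicator {p - \<delta>..p + \<delta>} s))"
      unfolding h_def
      by (intro integral_add integrable_const_ivl) (use integrable_on_cmult_left[OF sum_int] in simp)
    also have "\<dots> = \<epsilon> * content {a..b} + 2 * \<bar>M\<bar> * (\<Sum>p\<in>F. integral {a..b} (indicator {p - \<delta>..p + \<delta>}))"
      using F(1) integral_indicator_interval_le(1)[OF bump] by (simp add: integral_sum)
    also have "\<dots> \<le> \<epsilon> * content {a..b} + 2 * \<bar>M\<bar> * (\<Sum>p\<in>F. 2 * \<delta>)"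
      using integral_indicator_interval_le(2)[OF bump] by (intro add_left_mono mult_left_mono sum_mono) auto
    also have "\<dots> \<le> \<epsilon> * content {a..b} + \<rho>"
      using \<delta>(2) by simp
    finally show ?thesis .
  qed
  moreover have "\<bar>g t - g s\<bar> \<le> h s" if st: "s \<in> {a..b}" "t \<in> {a..b}" "\<bar>s - t\<bar> < \<delta>" for s t
  proof (cases "F \<inter> {min s t..max s t} = {}")
    case True
    then have "\<bar>g t - g s\<bar> \<le> \<epsilon>"
      using g[of t s] st by (simp add: \<delta>_def abs_minus_commute min.commute max.commute)
    moreover have "0 \<le> 2 * \<bar>M\<bar> * (\<Sum>p\<in>F. indicator {p - \<delta>..p + \<delta>} s :: real)"
      by (simp add: sum_nonneg)
    ultimately show ?thesis
      unfolding h_def by linarith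
  next
    case False
    then obtain p where "p \<in> F" "p \<in> {min s t..max s t}"
      by blast
    moreover from this(2) have "s \<in> {p - \<delta>..p + \<delta>}"
      using st(3) by (cases "s \<le> t") auto
    ultimately have "1 \<le> (\<Sum>p\<in>F. indicator {p - \<delta>..p + \<delta>} s :: real)"
      using member_le_sum[of p F "\<lambda>p. indicator {p - \<delta>..p + \<delta>} s :: real"] F(1) by simp
    then have "2 * \<bar>M\<bar> \<le> 2 * \<bar>M\<bar> * (\<Sum>p\<in>F. indicator {p - \<delta>..p + \<delta>} s :: real)"
      using mult_left_mono[of 1 _ "2 * \<bar>M\<bar>"] by simp
    moreover have "\<bar>g t - g s\<bar> \<le> 2 * \<bar>M\<bar>"
      using bound[OF st(1)] bound[OF st(2)] by linarith
    ultimately show ?thesis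
      unfolding h_def using \<open>\<epsilon> \<ge> 0\<close> by linarith
  qed
  ultimately show ?thesis
    using \<delta>(1) by blast
qed

lemma riemann_integrable_on_if_piecewise_oscillation:
  fixes g :: "real \<Rightarrow> real"
  assumes bound: "\<And>s. s \<in> {a..b} \<Longrightarrow> \<bar>g s\<bar> \<le> M"
    and osc: "\<And>e. e > 0 \<Longrightarrow> piecewise_oscillation_le g {a..b} e"
  shows "riemann_integrable_on g a b"
proof (rule riemann_integrable_on_if_oscillation_dominated)
  have "countable {y \<in> {a..b}. \<not> continuous (at y within {a..b}) g}"
    using osc by (rule countable_discontinuities_if_piecewise_oscillation)
  then show "g integrable_on {a..b}"
    using integrable_on_if_null_discontinuities[of a b g M] bound
    by (simp add: countable_imp_null_set_lborel null_sets_completionI)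
  fix e :: real assume "e > 0"
  define \<epsilon> where "\<epsilon> = e / (2 * (content {a..b} + 1))"
  have \<epsilon>: "\<epsilon> > 0" "\<epsilon> * content {a..b} < e / 2"
    using \<open>e > 0\<close> by (auto simp: \<epsilon>_def field_simps)
  obtain \<delta> h where "\<delta> > 0" "h integrable_on {a..b}" "integral {a..b} h \<le> \<epsilon> * content {a..b} + e / 2"
    and "\<forall>s\<in>{a..b}. \<forall>t\<in>{a..b}. \<bar>s - t\<bar> < \<delta> \<longrightarrow> \<bar>g t - g s\<bar> \<le> h s"
    using piecewise_oscillation_le_dominated[OF bound osc[OF \<epsilon>(1)], of "e / 2"] \<epsilon>(1) \<open>e > 0\<close>
    by auto
  with \<epsilon>(2) show "\<exists>\<delta>>0. \<exists>h. h integrable_on {a..b} \<and> integral {a..b} h < e \<and>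
                 (\<forall>s\<in>{a..b}. \<forall>t\<in>{a..b}. \<bar>s - t\<bar> < \<delta> \<longrightarrow> \<bar>g t - g s\<bar> \<le> h s)"
    by (intro exI[of _ \<delta>] conjI exI[of _ h]) auto
qed

lemma affine_interpolation_endpoints:
  fixes a b u v :: real
  assumes "a \<noteq> b"
  shows "(v - u) / (b - a) * a + (b * u - a * v) / (b - a) = u"
    and "(v - u) / (b - a) * b + (b * u - a * v) / (b - a) = v"
  using assms by (simp_all add: divide_simps) (simp_all add: algebra_simps)

theorem mainTheorem6:
  fixes N :: nat and x :: "nat \<Rightarrow> real" and \<alpha> :: "nat \<Rightarrow> real"
    and q :: "nat \<Rightarrow> real \<Rightarrow> real" and f :: "real \<Rightarrow> real"
  assumes N: "N \<ge> 2"
    and incr: "\<And>i. i < N \<Longrightarrow> x i < x (Suc i)"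
    and alpha: "\<And>i. 1 \<le> i \<Longrightarrow> i \<le> N \<Longrightarrow> \<alpha> i \<in> {-1<..<1}"
    and lip: "\<And>i. 1 \<le> i \<Longrightarrow> i \<le> N \<Longrightarrow> \<exists>C. C-lipschitz_on {x 0..x N} (q i)"
    and bdd: "bounded (f ` {x 0..x N})"
    and fe: "\<And>i y. 1 \<le> i \<Longrightarrow> i \<le> N \<Longrightarrow>
              y \<in> (if i < N then {x (i-1)..<x i} else {x (N-1)..x N}) \<Longrightarrow>
              (let a = (x i - x (i-1)) / (x N - x 0);
                   b = (x N * x (i-1) - x 0 * x i) / (x N - x 0)
               in f y = \<alpha> i * f ((y - b) / a) + q i ((y - b) / a))"
  shows "{y \<in> {x 0..x N}. \<not> continuous (at y within {x 0..x N}) f} \<in> null_sets lebesgue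
         \<and> riemann_integrable_on f (x 0) (x N)"
proof -
  have ab: "x 0 < x N"
    using partition_less[where x = x and N = N, OF incr, of 0 N] N by simp
  define A where "A i = (x i - x (i - 1)) / (x N - x 0)" for i
  define B where "B i = (x N * x (i - 1) - x 0 * x i) / (x N - x 0)" for i
  have A: "A i > 0" if "1 \<le> i" "i \<le> N" for i
    using partition_less[where x = x and N = N, OF incr, of "i - 1" i] that ab by (simp add: A_def)
  have ends: "A i * x 0 + B i = x (i - 1) \<and> A i * x N + B i = x i" for i
    using affine_interpolation_endpoints[of "x 0" "x N"] ab by (simp add: A_def B_def)
  \<comment> \<open>The partition points are cut points, so the equation is only needed on open pieces.\<close>
  have fe': "f y = \<alpha> i * f ((y - B i) / A i) + q i ((y - B i) / A i)"
    if "1 \<le> i" "i \<le> N" "y \<in> {x (i - 1)<..<x i}" for i y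
    using fe[OF that(1,2), of y] that by (cases "i < N") (auto simp: A_def B_def Let_def)
  have osc: "piecewise_oscillation_le f {x 0..x N} e" if "e > 0" for e
    using piecewise_oscillation_le_self_affine[OF A ends _ lip bdd fe' that] alpha by (simp add: abs_less_iff)
  obtain M where M: "\<And>y. y \<in> {x 0..x N} \<Longrightarrow> \<bar>f y\<bar> \<le> M"
    using bdd unfolding bounded_pos by (metis image_eqI real_norm_def)
  have "countable {y \<in> {x 0..x N}. \<not> continuous (at y within {x 0..x N}) f}"
    using osc by (rule countable_discontinuities_if_piecewise_oscillation)
  then show ?thesis
    using riemann_integrable_on_if_piecewise_oscillation[OF M osc]
    by (simp add: countable_imp_null_set_lborel null_sets_completionI)
qed

end
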